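(* A finite poset $P$ is a c.i.-poset if and only if it does not contain any of the following three posets as an induced subposet: $P_1$: four elements $a,b,c,d$ with $c<b<a$ and $c<d$, and no other relations (so $d$ is incomparable to $a$ and $b$); $P_2$: five elements $e,f,g,h,i$ with $f<e$, $f<g$, $h<g$, $h<i$, and no other relations; $P_3$: four elements, three pairwise incomparable elements each lying above a common fourth element, and no other relations.
   Context: A poset $Q$ is an induced subposet of $P$ if there is an injective map $\iota:Q\to P$ with $\iota(q)\le_P\iota(q')$ if and only if $q\le_Qq'$. For a finite poset $P$, a connected order ideal is a nonempty downward-closed subset whose induced Hasse diagram is connected; $\mathcal{J}_{\mathrm{conn}}(P)$ is the set of these; two connected order ideals intersect nontrivially if they are neither disjoint nor nested, and $\Pi(P)$ is the set of such unordered pairs. $P$ is a c.i.-poset if $|\mathcal{J}_{\mathrm{conn}}(P)|-|\Pi(P)|=|P|$; equivalently, for any field $k$, the presentation of the ring $R_P$ (the span in $k[x_p:p\in P]$ of the monomials $\prod_px_p^{f(p)}$ over $f:P\to\mathbb{N}$ weakly order-reversing) as a quotient of $k[U_J]_{J\in\mathcal{J}_{\mathrm{conn}}(P)}$ via $U_J\mapsto\prod_{p\in J}x_p$ is a complete intersection presentation. *)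

theory Defs
  imports Main
begin

definition finite_poset :: "'a set \<Rightarrow> ('a \<Rightarrow> 'a \<Rightarrow> bool) \<Rightarrow> bool" where
  "finite_poset S le \<longleftrightarrow> finite S \<and>
     (\<forall>x\<in>S. le x x) \<and>
     (\<forall>x\<in>S. \<forall>y\<in>S. le x y \<and> le y x \<longrightarrow> x = y) \<and>
     (\<forall>x\<in>S. \<forall>y\<in>S. \<forall>z\<in>S. le x y \<and> le y z \<longrightarrow> le x z)"

definition covers :: "'a set \<Rightarrow> ('a \<Rightarrow> 'a \<Rightarrow> bool) \<Rightarrow> 'a \<Rightarrow> 'a \<Rightarrow> bool" where
  "covers S le x y \<longleftrightarrow> x \<in> S \<and> y \<in> S \<and> le x y \<and> x \<noteq> y \<and>
     \<not> (\<exists>z\<in>S. le x z \<and> z \<noteq> x \<and> le z y \<and> z \<noteq> y)"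

definition hasse_edges_on :: "'a set \<Rightarrow> ('a \<Rightarrow> 'a \<Rightarrow> bool) \<Rightarrow> 'a set \<Rightarrow> ('a \<times> 'a) set" where
  "hasse_edges_on S le J =
     {(x, y). x \<in> J \<and> y \<in> J \<and> (covers S le x y \<or> covers S le y x)}"

definition order_ideal :: "'a set \<Rightarrow> ('a \<Rightarrow> 'a \<Rightarrow> bool) \<Rightarrow> 'a set \<Rightarrow> bool" where
  "order_ideal S le J \<longleftrightarrow> J \<subseteq> S \<and> (\<forall>x\<in>J. \<forall>y\<in>S. le y x \<longrightarrow> y \<in> J)"

definition conn_ideals :: "'a set \<Rightarrow> ('a \<Rightarrow> 'a \<Rightarrow> bool) \<Rightarrow> 'a set set" where
  "conn_ideals S le = {J. J \<noteq> {} \<and> order_ideal S le J \<and>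
     (\<forall>x\<in>J. \<forall>y\<in>J. (x, y) \<in> (hasse_edges_on S le J)\<^sup>*)}"

definition intersect_nontrivially :: "'a set \<Rightarrow> 'a set \<Rightarrow> bool" where
  "intersect_nontrivially J J' \<longleftrightarrow> J \<inter> J' \<noteq> {} \<and> \<not> J \<subseteq> J' \<and> \<not> J' \<subseteq> J"

definition Pi_pairs :: "'a set \<Rightarrow> ('a \<Rightarrow> 'a \<Rightarrow> bool) \<Rightarrow> 'a set set set" where
  "Pi_pairs S le = {{J, J'} | J J'. J \<in> conn_ideals S le \<and> J' \<in> conn_ideals S le \<and>
     intersect_nontrivially J J'}"

definition ci_poset :: "'a set \<Rightarrow> ('a \<Rightarrow> 'a \<Rightarrow> bool) \<Rightarrow> bool" where
  "ci_poset S le \<longleftrightarrow>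
     int (card (conn_ideals S le)) - int (card (Pi_pairs S le)) = int (card S)"

definition induced_subposet ::
  "'b set \<Rightarrow> ('b \<Rightarrow> 'b \<Rightarrow> bool) \<Rightarrow> 'a set \<Rightarrow> ('a \<Rightarrow> 'a \<Rightarrow> bool) \<Rightarrow> bool" where
  "induced_subposet Q leQ S le \<longleftrightarrow>
     (\<exists>\<iota>. inj_on \<iota> Q \<and> \<iota> ` Q \<subseteq> S \<and>
        (\<forall>q\<in>Q. \<forall>q'\<in>Q. le (\<iota> q) (\<iota> q') \<longleftrightarrow> leQ q q'))"

text \<open>P1: a=0, b=1, c=2, d=3 with c<b<a, c<d.\<close>
definition P1_le :: "nat \<Rightarrow> nat \<Rightarrow> bool" where
  "P1_le x y \<longleftrightarrow> x = y \<or> (x, y) \<in> {(2,1), (1,0), (2,0), (2,3)}"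

text \<open>P2: e=0, f=1, g=2, h=3, i=4 with f<e, f<g, h<g, h<i.\<close>
definition P2_le :: "nat \<Rightarrow> nat \<Rightarrow> bool" where
  "P2_le x y \<longleftrightarrow> x = y \<or> (x, y) \<in> {(1,0), (1,2), (3,2), (3,4)}"

definition P3_le :: "nat \<Rightarrow> nat \<Rightarrow> bool" where
  "P3_le x y \<longleftrightarrow> x = y \<or> (x, y) \<in> {(0,1), (0,2), (0,3)}"

end

(* The connected ideals of P are the principal ideals down p together with the unions A \<union> B of
   nontrivially intersecting pairs in \<Pi>(P), and every nonprincipal connected ideal is such a union.
   Hence P is a c.i.-poset exactly when no connected ideal is the union of two different pairs.
   Each of P1, P2, P3 produces two pairs with the same union. Conversely, in their absence both
   members of a pair are principal, generated by maximal elements of the union, so a pair is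
   recovered from the maximal elements of its union. *)

theory Submission
  imports Defs
begin

locale fin_poset =
  fixes S :: "'a set" and le :: "'a \<Rightarrow> 'a \<Rightarrow> bool"
  assumes finite_poset: "finite_poset S le"
begin

lemma finite_carrier: "finite S"
  using finite_poset unfolding finite_poset_def by blast

lemma poset_refl: "x \<in> S \<Longrightarrow> le x x"
  using finite_poset unfolding finite_poset_def by blast

lemma poset_antisym: "\<lbrakk>x \<in> S; y \<in> S; le x y; le y x\<rbrakk> \<Longrightarrow> x = y"
  using finite_poset unfolding finite_poset_def by blast

lemma poset_trans: "\<lbrakk>x \<in> S; y \<in> S; z \<in> S; le x y; le y z\<rbrakk> \<Longrightarrow> le x z"
  using finite_poset unfolding finite_poset_def by blast

definition down :: "'a \<Rightarrow> 'a set" where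
  "down p = {x \<in> S. le x p}"

definition maximal :: "'a set \<Rightarrow> 'a \<Rightarrow> bool" where
  "maximal K x \<longleftrightarrow> x \<in> K \<and> (\<forall>z\<in>K. le x z \<longrightarrow> z = x)"

lemma mem_down [simp]: "x \<in> down p \<longleftrightarrow> x \<in> S \<and> le x p"
  by (simp add: down_def)

lemma down_subset_down: "\<lbrakk>p \<in> S; q \<in> S; le p q\<rbrakk> \<Longrightarrow> down p \<subseteq> down q"
  by (auto intro: poset_trans)

lemma inj_on_down: "inj_on down S"
proof (rule inj_onI)
  fix p q assume "p \<in> S" "q \<in> S" "down p = down q"
  then have "le p q" and "le q p"
    using poset_refl by (metis mem_down)+
  then show "p = q"
    using \<open>p \<in> S\<close> \<open>q \<in> S\<close> by (rule poset_antisym[rotated 2])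
qed

lemma exists_maximal_above:
  assumes "A \<subseteq> S" and "v \<in> A"
  shows "\<exists>w. maximal A w \<and> le v w"
proof -
  let ?less = "\<lambda>x y. le x y \<and> x \<noteq> y"
  have "finite A"
    using assms(1) finite_carrier finite_subset by blast
  moreover have "asymp_on A ?less"
    by (rule asymp_onI) (use assms(1) poset_antisym in blast)
  moreover have "transp_on A ?less"
    by (rule transp_onI) (metis assms(1) poset_antisym poset_trans subsetD)
  ultimately obtain w where w: "w \<in> A" "le v w"
    and top: "\<forall>z\<in>A. ?less w z \<longrightarrow> \<not> le v z"
    using Finite_Set.bex_max_element_with_property[of A ?less "le v"] assms poset_refl by blast
  have "z = w" if "z \<in> A" "le w z" for z
  proof -
    have "le v z"
      using poset_trans[of v w z] that w assms by auto
    then show ?thesis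
      using top that by auto
  qed
  then have "maximal A w"
    unfolding maximal_def using w(1) by blast
  with w show ?thesis by blast
qed

section \<open>Connected order ideals\<close>

lemma conn_ideal_subset: "K \<in> conn_ideals S le \<Longrightarrow> K \<subseteq> S"
  unfolding conn_ideals_def order_ideal_def by blast

lemma conn_ideal_downward: "\<lbrakk>K \<in> conn_ideals S le; x \<in> K; y \<in> S; le y x\<rbrakk> \<Longrightarrow> y \<in> K"
  unfolding conn_ideals_def order_ideal_def by blast

lemma hasse_path_sym:
  assumes "(x, y) \<in> (hasse_edges_on S le J)\<^sup>*"
  shows "(y, x) \<in> (hasse_edges_on S le J)\<^sup>*"
proof -
  have "sym (hasse_edges_on S le J)"
    unfolding sym_def hasse_edges_on_def by auto
  with assms show ?thesis
    by (meson sym_rtrancl symD)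
qed

lemma card_interval_less:
  assumes "x \<in> S" "y \<in> S" "z \<in> S" "le x z" "le z y" "z \<noteq> x" "z \<noteq> y"
  shows "card {w \<in> S. le x w \<and> le w z} < card {w \<in> S. le x w \<and> le w y}"
    and "card {w \<in> S. le z w \<and> le w y} < card {w \<in> S. le x w \<and> le w y}"
proof -
  have fin: "finite {w \<in> S. le x w \<and> le w y}"
    using finite_carrier by simp
  have "y \<notin> {w \<in> S. le x w \<and> le w z}"
    using assms poset_antisym[of z y] by auto
  moreover have "{w \<in> S. le x w \<and> le w z} \<subseteq> {w \<in> S. le x w \<and> le w y}"
    using assms by (auto intro: poset_trans[of _ z y])
  moreover have "y \<in> {w \<in> S. le x w \<and> le w y}"
    using assms poset_refl[of y] poset_trans[of x z y] by auto
  ultimately show "card {w \<in> S. le x w \<and> le w z} < card {w \<in> S. le x w \<and> le w y}"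
    by (intro psubset_card_mono[OF fin]) blast
  have "x \<notin> {w \<in> S. le z w \<and> le w y}"
    using assms poset_antisym[of z x] by auto
  moreover have "{w \<in> S. le z w \<and> le w y} \<subseteq> {w \<in> S. le x w \<and> le w y}"
    using assms by (auto intro: poset_trans[of x z])
  moreover have "x \<in> {w \<in> S. le x w \<and> le w y}"
    using assms poset_refl[of x] poset_trans[of x z y] by auto
  ultimately show "card {w \<in> S. le z w \<and> le w y} < card {w \<in> S. le x w \<and> le w y}"
    by (intro psubset_card_mono[OF fin]) blast
qed

text \<open>Insert intermediate elements until only cover steps remain; each insertion shrinks the
  interval [x, y].\<close>
lemma hasse_path_below:
  assumes K: "order_ideal S le K" and "y \<in> K" "x \<in> S" "le x y"
  shows "(x, y) \<in> (hasse_edges_on S le K)\<^sup>*"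
  using assms(2-)
proof (induction "card {z \<in> S. le x z \<and> le z y}" arbitrary: x y rule: less_induct)
  case less
  have yS: "y \<in> S" and xK: "x \<in> K"
    using K less.prems unfolding order_ideal_def by auto
  show ?case
  proof (cases "x = y \<or> covers S le x y")
    case True
    then show ?thesis
      using xK less.prems(1) unfolding hasse_edges_on_def by auto
  next
    case False
    then obtain z where z: "z \<in> S" "le x z" "le z y" "z \<noteq> x" "z \<noteq> y"
      using less.prems yS unfolding covers_def by blast
    have "z \<in> K"
      using K less.prems(1) z unfolding order_ideal_def by blast
    have "(x, z) \<in> (hasse_edges_on S le K)\<^sup>*"
      using less.hyps[OF card_interval_less(1)[OF less.prems(2) yS z]] \<open>z \<in> K\<close> less.prems(2) z(2)
      by blast
    moreover have "(z, y) \<in> (hasse_edges_on S le K)\<^sup>*"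
      using less.hyps[OF card_interval_less(2)[OF less.prems(2) yS z]] less.prems(1) z(1,3)
      by blast
    ultimately show ?thesis
      by (rule rtrancl_trans)
  qed
qed

lemma down_conn_ideal:
  assumes "p \<in> S"
  shows "down p \<in> conn_ideals S le"
proof -
  have ideal: "order_ideal S le (down p)"
    unfolding order_ideal_def by (auto intro: poset_trans[OF _ _ assms])
  have top: "p \<in> down p"
    using assms poset_refl by simp
  have "(x, p) \<in> (hasse_edges_on S le (down p))\<^sup>*" if "x \<in> down p" for x
    using hasse_path_below[OF ideal top] that by simp
  then have "(x, y) \<in> (hasse_edges_on S le (down p))\<^sup>*" if "x \<in> down p" "y \<in> down p" for x y
    using that hasse_path_sym rtrancl_trans by metis
  then show ?thesis
    using ideal top unfolding conn_ideals_def by blast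
qed

lemma Un_conn_ideal:
  assumes A: "A \<in> conn_ideals S le" and B: "B \<in> conn_ideals S le" and AB: "A \<inter> B \<noteq> {}"
  shows "A \<union> B \<in> conn_ideals S le"
proof -
  have "(hasse_edges_on S le K)\<^sup>* \<subseteq> (hasse_edges_on S le (A \<union> B))\<^sup>*" if "K \<subseteq> A \<union> B" for K
    by (rule rtrancl_mono) (use that in \<open>auto simp: hasse_edges_on_def\<close>)
  moreover obtain c where c: "c \<in> A" "c \<in> B"
    using AB by blast
  ultimately have to_c: "(x, c) \<in> (hasse_edges_on S le (A \<union> B))\<^sup>*" if "x \<in> A \<union> B" for x
    using that A B unfolding conn_ideals_def by blast
  have "(x, y) \<in> (hasse_edges_on S le (A \<union> B))\<^sup>*" if "x \<in> A \<union> B" "y \<in> A \<union> B" for x y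
    using to_c[OF that(1)] hasse_path_sym[OF to_c[OF that(2)]] by (rule rtrancl_trans)
  moreover have "order_ideal S le (A \<union> B)"
    using A B unfolding conn_ideals_def order_ideal_def by blast
  ultimately show ?thesis
    using c unfolding conn_ideals_def by blast
qed

text \<open>A Hasse path from y to k leaves Y along some cover edge, which points upwards because Y is
  downward closed in K.\<close>
lemma conn_ideal_leaves_down_closed:
  assumes K: "K \<in> conn_ideals S le" and Y: "Y \<subseteq> K" "y \<in> Y" "k \<in> K" "k \<notin> Y"
    and down_closed: "\<forall>z\<in>Y. \<forall>t\<in>K. le t z \<longrightarrow> t \<in> Y"
  shows "\<exists>u\<in>Y. \<exists>v\<in>K - Y. le u v"
proof -
  have leave: "(a, b) \<in> E\<^sup>* \<Longrightarrow> a \<in> Y \<Longrightarrow> b \<notin> Y \<Longrightarrow> \<exists>u v. (u, v) \<in> E \<and> u \<in> Y \<and> v \<notin> Y"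
    for a b and E :: "('a \<times> 'a) set"
    by (induction rule: rtrancl_induct) blast+
  have "(y, k) \<in> (hasse_edges_on S le K)\<^sup>*"
    using K Y unfolding conn_ideals_def by blast
  then obtain u v where uv: "(u, v) \<in> hasse_edges_on S le K" "u \<in> Y" "v \<notin> Y"
    using leave Y by metis
  then have "v \<in> K" "covers S le u v \<or> covers S le v u"
    unfolding hasse_edges_on_def by auto
  then show ?thesis
    using uv down_closed unfolding covers_def by blast
qed

section \<open>Counting connected ideals\<close>

lemma Pi_pairsE:
  assumes "p \<in> Pi_pairs S le"
  obtains A B where "p = {A, B}" "A \<in> conn_ideals S le" "B \<in> conn_ideals S le"
    "intersect_nontrivially A B"
  using assms unfolding Pi_pairs_def by blast

lemma Pi_pairsI:
  "\<lbrakk>A \<in> conn_ideals S le; B \<in> conn_ideals S le; intersect_nontrivially A B\<rbrakk>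
    \<Longrightarrow> {A, B} \<in> Pi_pairs S le"
  unfolding Pi_pairs_def by blast

lemma Union_Pi_pair_nonprincipal:
  assumes "p \<in> Pi_pairs S le"
  shows "\<Union>p \<in> conn_ideals S le - down ` S"
proof -
  obtain A B where AB: "p = {A, B}" "A \<in> conn_ideals S le" "B \<in> conn_ideals S le"
    and nontriv: "A \<inter> B \<noteq> {}" "\<not> A \<subseteq> B" "\<not> B \<subseteq> A"
    using assms by (elim Pi_pairsE) (auto simp: intersect_nontrivially_def)
  have absorbs: "Y \<subseteq> X" if "X \<in> conn_ideals S le" "q \<in> X" "X \<union> Y = down q" for X Y q
    using that conn_ideal_downward[of X q] by auto
  have "A \<union> B \<notin> down ` S"
  proof
    assume "A \<union> B \<in> down ` S"
    then obtain q where q: "q \<in> S" "A \<union> B = down q"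
      by blast
    then have "q \<in> A \<union> B"
      using poset_refl by simp
    then show False
      using absorbs[of A q B] absorbs[of B q A] q(2) AB(2,3) nontriv(2,3) by (metis Un_commute UnE)
  qed
  with AB nontriv Un_conn_ideal show ?thesis
    by simp
qed

text \<open>A nonprincipal connected ideal J is the union of a maximal connected ideal A strictly
  inside it and the principal ideal of an element of J just above A.\<close>
lemma nonprincipal_conn_ideal_is_Union_Pi_pair:
  assumes J: "J \<in> conn_ideals S le" "J \<notin> down ` S"
  shows "J \<in> Union ` Pi_pairs S le"
proof -
  have JS: "J \<subseteq> S"
    using J conn_ideal_subset by blast
  obtain p where p: "p \<in> J"
    using J unfolding conn_ideals_def by blast
  have "down p \<subseteq> J"
    using conn_ideal_downward[OF J(1) p] by auto
  then have "{K \<in> conn_ideals S le. K \<subset> J} \<noteq> {}"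
    using J p JS down_conn_ideal by blast
  moreover have "finite {K \<in> conn_ideals S le. K \<subset> J}"
    using finite_subset[OF JS finite_carrier] by (auto intro: finite_subset[of _ "Pow J"])
  ultimately obtain A where "A \<in> {K \<in> conn_ideals S le. K \<subset> J}"
    and A_max: "\<forall>K\<in>{K \<in> conn_ideals S le. K \<subset> J}. A \<subseteq> K \<longrightarrow> A = K"
    using finite_has_maximal[of "{K \<in> conn_ideals S le. K \<subset> J}"] by auto
  then have A: "A \<in> conn_ideals S le" "A \<subset> J"
    by auto
  obtain a k where "a \<in> A" "k \<in> J" "k \<notin> A"
    using A unfolding conn_ideals_def by blast
  moreover have "\<forall>z\<in>A. \<forall>t\<in>J. le t z \<longrightarrow> t \<in> A"
    using conn_ideal_downward[OF A(1)] JS by blast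
  ultimately obtain u v where uv: "u \<in> A" "v \<in> J" "v \<notin> A" "le u v"
    using conn_ideal_leaves_down_closed[OF J(1)] A(2) by (metis Diff_iff psubset_imp_subset)
  have vS: "v \<in> S" and uS: "u \<in> S"
    using uv JS A by auto
  have B: "down v \<in> conn_ideals S le" "u \<in> down v" "v \<in> down v" "down v \<subseteq> J"
    using down_conn_ideal[OF vS] uS uv(4) vS poset_refl conn_ideal_downward[OF J(1) uv(2)] by auto
  have "A \<union> down v \<in> conn_ideals S le"
    using Un_conn_ideal[OF A(1) B(1)] uv(1) B(2) by blast
  then have J_eq: "J = A \<union> down v"
    using A_max A B(3,4) uv(3) by blast
  have "intersect_nontrivially A (down v)"
    unfolding intersect_nontrivially_def using J_eq J(2) vS uv(1,3) B(2,3) by blast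
  then have "{A, down v} \<in> Pi_pairs S le"
    using Pi_pairsI A(1) B(1) by blast
  with J_eq show ?thesis
    by (metis Union_insert ccpo_Sup_singleton image_eqI)
qed

lemma Union_Pi_pairs_eq: "Union ` Pi_pairs S le = conn_ideals S le - down ` S"
proof
  show "Union ` Pi_pairs S le \<subseteq> conn_ideals S le - down ` S"
    using Union_Pi_pair_nonprincipal by (rule image_subsetI)
  show "conn_ideals S le - down ` S \<subseteq> Union ` Pi_pairs S le"
    using nonprincipal_conn_ideal_is_Union_Pi_pair by (meson DiffE subsetI)
qed

lemma ci_poset_iff_inj_on_Union: "ci_poset S le \<longleftrightarrow> inj_on Union (Pi_pairs S le)"
proof -
  have fin_conn: "finite (conn_ideals S le)"
    using finite_carrier conn_ideal_subset by (auto intro: finite_subset[of _ "Pow S"])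
  have "Pi_pairs S le \<subseteq> Pow (conn_ideals S le)"
    unfolding Pi_pairs_def by blast
  then have fin_Pi: "finite (Pi_pairs S le)"
    using fin_conn finite_subset by blast
  have "down ` S \<subseteq> conn_ideals S le"
    using down_conn_ideal by blast
  then have "card (conn_ideals S le) = card (down ` S) + card (conn_ideals S le - down ` S)"
    using fin_conn by (metis card_Diff_subset finite_subset card_mono le_add_diff_inverse)
  also have "\<dots> = card S + card (Union ` Pi_pairs S le)"
    using card_image[OF inj_on_down] Union_Pi_pairs_eq by simp
  finally have "ci_poset S le \<longleftrightarrow> card (Union ` Pi_pairs S le) = card (Pi_pairs S le)"
    unfolding ci_poset_def by simp
  also have "\<dots> \<longleftrightarrow> inj_on Union (Pi_pairs S le)"
    by (rule inj_on_iff_eq_card[OF fin_Pi, symmetric])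
  finally show ?thesis .
qed

section \<open>The forbidden subposets\<close>

lemma induced_P1_iff:
  "induced_subposet {0::nat, 1, 2, 3} P1_le S le \<longleftrightarrow>
    (\<exists>a b c d. a \<in> S \<and> b \<in> S \<and> c \<in> S \<and> d \<in> S \<and>
      le c b \<and> c \<noteq> b \<and> le b a \<and> b \<noteq> a \<and> le c d \<and> c \<noteq> d \<and>
      \<not> le d a \<and> \<not> le a d \<and> \<not> le d b \<and> \<not> le b d)"
  (is "?embedded \<longleftrightarrow> ?pattern")
proof
  assume ?embedded
  then obtain \<iota> where "\<iota> ` {0::nat, 1, 2, 3} \<subseteq> S"
    and "\<forall>q\<in>{0::nat, 1, 2, 3}. \<forall>q'\<in>{0, 1, 2, 3}. le (\<iota> q) (\<iota> q') \<longleftrightarrow> P1_le q q'"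
    unfolding induced_subposet_def by (elim exE conjE) (rule that)
  then show ?pattern
    by (intro exI[of _ "\<iota> 0"] exI[of _ "\<iota> 1"] exI[of _ "\<iota> 2"] exI[of _ "\<iota> 3"]) (auto simp: P1_le_def)
next
  assume ?pattern
  then obtain a b c d where S: "a \<in> S" "b \<in> S" "c \<in> S" "d \<in> S"
    and r: "le c b" "c \<noteq> b" "le b a" "b \<noteq> a" "le c d" "c \<noteq> d"
    and n: "\<not> le d a" "\<not> le a d" "\<not> le d b" "\<not> le b d"
    by blast
  have "le c a"
    using poset_trans[of c b a] S r by blast
  moreover have "\<not> le b c" "\<not> le a b" "\<not> le d c"
    using poset_antisym S r by blast+
  moreover have "\<not> le a c"
    using poset_trans[of a c b] S r \<open>\<not> le a b\<close> by blast
  moreover have "a \<noteq> c" "d \<noteq> a" "d \<noteq> b"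
    using n poset_refl S r \<open>le c a\<close> by auto
  ultimately show ?embedded
    unfolding induced_subposet_def P1_le_def using S r n poset_refl
    by (intro exI[of _ "\<lambda>n. [a, b, c, d] ! n"]) (auto simp: inj_on_def)
qed

lemma induced_P2_iff:
  "induced_subposet {0::nat, 1, 2, 3, 4} P2_le S le \<longleftrightarrow>
    (\<exists>e f g h i. e \<in> S \<and> f \<in> S \<and> g \<in> S \<and> h \<in> S \<and> i \<in> S \<and>
      le f e \<and> f \<noteq> e \<and> le f g \<and> f \<noteq> g \<and> le h g \<and> h \<noteq> g \<and> le h i \<and> h \<noteq> i \<and>
      \<not> le e g \<and> \<not> le g e \<and> \<not> le e i \<and> \<not> le i e \<and> \<not> le g i \<and> \<not> le i g \<and>
      \<not> le f h \<and> \<not> le h f \<and> \<not> le f i \<and> \<not> le h e)"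
  (is "?embedded \<longleftrightarrow> ?pattern")
proof
  assume ?embedded
  then obtain \<iota> where "\<iota> ` {0::nat, 1, 2, 3, 4} \<subseteq> S"
    and "\<forall>q\<in>{0::nat, 1, 2, 3, 4}. \<forall>q'\<in>{0, 1, 2, 3, 4}. le (\<iota> q) (\<iota> q') \<longleftrightarrow> P2_le q q'"
    unfolding induced_subposet_def by (elim exE conjE) (rule that)
  then show ?pattern
    by (intro exI[of _ "\<iota> 0"] exI[of _ "\<iota> 1"] exI[of _ "\<iota> 2"] exI[of _ "\<iota> 3"] exI[of _ "\<iota> 4"]) (auto simp: P2_le_def)
next
  assume ?pattern
  then obtain e f g h i where S: "e \<in> S" "f \<in> S" "g \<in> S" "h \<in> S" "i \<in> S"
    and r: "le f e" "f \<noteq> e" "le f g" "f \<noteq> g" "le h g" "h \<noteq> g" "le h i" "h \<noteq> i"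
    and n: "\<not> le e g" "\<not> le g e" "\<not> le e i" "\<not> le i e" "\<not> le g i" "\<not> le i g"
      "\<not> le f h" "\<not> le h f" "\<not> le f i" "\<not> le h e"
    by blast
  have "\<not> le e f" "\<not> le g f" "\<not> le g h" "\<not> le i h"
    using poset_antisym S r by blast+
  moreover have "\<not> le i f"
    using poset_trans[of i f e] S r n by blast
  moreover have "\<not> le e h"
    using poset_trans[of e h g] S r n by blast
  moreover have "e \<noteq> g" "e \<noteq> i" "g \<noteq> i" "f \<noteq> h" "f \<noteq> i" "h \<noteq> e"
    using n poset_refl S by auto
  ultimately show ?embedded
    unfolding induced_subposet_def P2_le_def using S r n poset_refl
    by (intro exI[of _ "\<lambda>n. [e, f, g, h, i] ! n"]) (auto simp: inj_on_def)
qed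

lemma induced_P3_iff:
  "induced_subposet {0::nat, 1, 2, 3} P3_le S le \<longleftrightarrow>
    (\<exists>c x y z. c \<in> S \<and> x \<in> S \<and> y \<in> S \<and> z \<in> S \<and>
      le c x \<and> c \<noteq> x \<and> le c y \<and> c \<noteq> y \<and> le c z \<and> c \<noteq> z \<and>
      \<not> le x y \<and> \<not> le y x \<and> \<not> le x z \<and> \<not> le z x \<and> \<not> le y z \<and> \<not> le z y)"
  (is "?embedded \<longleftrightarrow> ?pattern")
proof
  assume ?embedded
  then obtain \<iota> where "\<iota> ` {0::nat, 1, 2, 3} \<subseteq> S"
    and "\<forall>q\<in>{0::nat, 1, 2, 3}. \<forall>q'\<in>{0, 1, 2, 3}. le (\<iota> q) (\<iota> q') \<longleftrightarrow> P3_le q q'"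
    unfolding induced_subposet_def by (elim exE conjE) (rule that)
  then show ?pattern
    by (intro exI[of _ "\<iota> 0"] exI[of _ "\<iota> 1"] exI[of _ "\<iota> 2"] exI[of _ "\<iota> 3"]) (auto simp: P3_le_def)
next
  assume ?pattern
  then obtain c x y z where S: "c \<in> S" "x \<in> S" "y \<in> S" "z \<in> S"
    and r: "le c x" "c \<noteq> x" "le c y" "c \<noteq> y" "le c z" "c \<noteq> z"
    and n: "\<not> le x y" "\<not> le y x" "\<not> le x z" "\<not> le z x" "\<not> le y z" "\<not> le z y"
    by blast
  have "\<not> le x c" "\<not> le y c" "\<not> le z c"
    using poset_antisym S r by blast+
  moreover have "x \<noteq> y" "x \<noteq> z" "y \<noteq> z"
    using n poset_refl S by auto
  ultimately show ?embedded
    unfolding induced_subposet_def P3_le_def using S r n poset_refl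
    by (intro exI[of _ "\<lambda>n. [c, x, y, z] ! n"]) (auto simp: inj_on_def)
qed

lemma not_inj_on_Union_Pi_pairs:
  assumes "A \<in> conn_ideals S le" "B \<in> conn_ideals S le" "intersect_nontrivially A B"
    and "C \<in> conn_ideals S le" "D \<in> conn_ideals S le" "intersect_nontrivially C D"
    and "A \<union> B = C \<union> D" "{A, B} \<noteq> {C, D}"
  shows "\<not> inj_on Union (Pi_pairs S le)"
  using assms Pi_pairsI[of A B] Pi_pairsI[of C D] by (metis Union_insert ccpo_Sup_singleton inj_onD)

lemma down_Un_down_conn_ideal:
  "\<lbrakk>p \<in> S; q \<in> S; u \<in> S; le u p; le u q\<rbrakk> \<Longrightarrow> down p \<union> down q \<in> conn_ideals S le"
  by (rule Un_conn_ideal) (auto intro: down_conn_ideal)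

text \<open>In P1, with c < b < a and c < d, the ideal generated by a and d is the union both of
  the pair (down a, down d) and of the pair (down a, down b \<union> down d).\<close>
lemma induced_P1_not_inj:
  assumes "induced_subposet {0::nat, 1, 2, 3} P1_le S le"
  shows "\<not> inj_on Union (Pi_pairs S le)"
proof -
  obtain a b c d where S: "a \<in> S" "b \<in> S" "c \<in> S" "d \<in> S"
    and r: "le c b" "c \<noteq> b" "le b a" "b \<noteq> a" "le c d" "c \<noteq> d"
    and n: "\<not> le d a" "\<not> le a d" "\<not> le d b" "\<not> le b d"
    using assms unfolding induced_P1_iff by blast
  have "le c a" "\<not> le a b"
    using poset_trans[of c b a] poset_antisym[of a b] S r by auto
  then have mem: "c \<in> down a" "c \<in> down d" "a \<in> down a" "b \<in> down b" "d \<in> down d"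
    and nonmem: "a \<notin> down b" "a \<notin> down d" "b \<notin> down d" "d \<notin> down a"
    using S r n poset_refl by auto
  have conn: "down a \<in> conn_ideals S le" "down d \<in> conn_ideals S le"
    "down b \<union> down d \<in> conn_ideals S le"
    using S r down_conn_ideal down_Un_down_conn_ideal by auto
  have nontriv: "intersect_nontrivially (down a) (down d)"
    "intersect_nontrivially (down a) (down b \<union> down d)"
    unfolding intersect_nontrivially_def using mem nonmem by blast+
  have "down a \<union> down d = down a \<union> (down b \<union> down d)"
    using down_subset_down[of b a] S r by auto
  moreover have "{down a, down d} \<noteq> {down a, down b \<union> down d}"
    using mem nonmem by (auto simp: doubleton_eq_iff)
  ultimately show ?thesis
    by (rule not_inj_on_Union_Pi_pairs[OF conn(1,2) nontriv(1) conn(1,3) nontriv(2)])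
qed

lemma induced_P2_not_inj:
  assumes "induced_subposet {0::nat, 1, 2, 3, 4} P2_le S le"
  shows "\<not> inj_on Union (Pi_pairs S le)"
proof -
  obtain e f g h i where S: "e \<in> S" "f \<in> S" "g \<in> S" "h \<in> S" "i \<in> S"
    and r: "le f e" "le f g" "le h g" "le h i"
    and n: "\<not> le e g" "\<not> le g e" "\<not> le e i" "\<not> le i e" "\<not> le g i" "\<not> le i g"
    using assms unfolding induced_P2_iff by blast
  have mem: "f \<in> down e" "f \<in> down g" "e \<in> down e" "g \<in> down g" "i \<in> down i"
    and nonmem: "e \<notin> down g" "e \<notin> down i" "g \<notin> down e" "i \<notin> down e" "i \<notin> down g"
    using S r n poset_refl by auto
  have conn: "down e \<in> conn_ideals S le" "down e \<union> down g \<in> conn_ideals S le"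
    "down g \<union> down i \<in> conn_ideals S le"
    using S r down_conn_ideal down_Un_down_conn_ideal by auto
  have nontriv: "intersect_nontrivially (down e \<union> down g) (down g \<union> down i)"
    "intersect_nontrivially (down e) (down g \<union> down i)"
    unfolding intersect_nontrivially_def using mem nonmem by blast+
  have "(down e \<union> down g) \<union> (down g \<union> down i) = down e \<union> (down g \<union> down i)"
    by blast
  moreover have "{down e \<union> down g, down g \<union> down i} \<noteq> {down e, down g \<union> down i}"
    using mem nonmem by (auto simp: doubleton_eq_iff)
  ultimately show ?thesis
    by (rule not_inj_on_Union_Pi_pairs[OF conn(2,3) nontriv(1) conn(1,3) nontriv(2)])
qed

lemma induced_P3_not_inj:
  assumes "induced_subposet {0::nat, 1, 2, 3} P3_le S le"
  shows "\<not> inj_on Union (Pi_pairs S le)"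
proof -
  obtain c x y z where S: "c \<in> S" "x \<in> S" "y \<in> S" "z \<in> S"
    and r: "le c x" "le c y" "le c z"
    and n: "\<not> le x y" "\<not> le y x" "\<not> le x z" "\<not> le z x" "\<not> le y z" "\<not> le z y"
    using assms unfolding induced_P3_iff by blast
  have mem: "c \<in> down x" "c \<in> down y" "c \<in> down z" "x \<in> down x" "y \<in> down y" "z \<in> down z"
    and nonmem: "x \<notin> down y" "x \<notin> down z" "y \<notin> down x" "y \<notin> down z" "z \<notin> down x"
      "z \<notin> down y"
    using S r n poset_refl by auto
  have conn: "down x \<in> conn_ideals S le" "down z \<in> conn_ideals S le"
    "down x \<union> down y \<in> conn_ideals S le" "down y \<union> down z \<in> conn_ideals S le"
    using S r down_conn_ideal down_Un_down_conn_ideal by auto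
  have nontriv: "intersect_nontrivially (down x \<union> down y) (down z)"
    "intersect_nontrivially (down x) (down y \<union> down z)"
    unfolding intersect_nontrivially_def using mem nonmem by blast+
  have "(down x \<union> down y) \<union> down z = down x \<union> (down y \<union> down z)"
    by blast
  moreover have "{down x \<union> down y, down z} \<noteq> {down x, down y \<union> down z}"
    using mem nonmem by (auto simp: doubleton_eq_iff)
  ultimately show ?thesis
    by (rule not_inj_on_Union_Pi_pairs[OF conn(3,2) nontriv(1) conn(1,4) nontriv(2)])
qed

section \<open>Pairs in the absence of the forbidden subposets\<close>

lemma maximalD:
  "maximal K x \<Longrightarrow> x \<in> K"
  "maximal K x \<Longrightarrow> z \<in> K \<Longrightarrow> le x z \<Longrightarrow> z = x"
  unfolding maximal_def by blast+

text \<open>Otherwise some m \<in> B - A lies above y. Since A \<not>\<subseteq> B, not all of A lies below maximal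
  elements of A below m; where a Hasse path in A leaves that part, a cover u < v together with a
  maximal x \<ge> u below m and a maximal w \<ge> v gives a copy of P1 with m on top.\<close>
lemma maximal_in_Un_if_no_P1:
  assumes no_P1: "\<not> induced_subposet {0::nat, 1, 2, 3} P1_le S le"
    and A: "A \<in> conn_ideals S le" and B: "B \<in> conn_ideals S le" and "\<not> A \<subseteq> B"
    and y: "maximal A y"
  shows "maximal (A \<union> B) y"
proof (rule ccontr)
  assume "\<not> maximal (A \<union> B) y"
  then obtain m where m: "m \<in> A \<union> B" "le y m" "m \<noteq> y"
    using y unfolding maximal_def by blast
  have AS: "A \<subseteq> S" and BS: "B \<subseteq> S"
    using A B conn_ideal_subset by auto
  have mA: "m \<notin> A"
    using maximalD(2)[OF y] m by blast
  with m have mB: "m \<in> B" and mS: "m \<in> S"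
    using BS by auto
  define Y where "Y = {z \<in> A. \<exists>x. maximal A x \<and> le z x \<and> le x m}"
  have "y \<in> Y"
    unfolding Y_def using y maximalD(1)[OF y] AS poset_refl m(2) by blast
  moreover obtain k where "k \<in> A" "k \<notin> Y"
  proof -
    have "\<not> (\<forall>z\<in>A. le z m)"
      using conn_ideal_downward[OF B mB] AS \<open>\<not> A \<subseteq> B\<close> by blast
    then obtain z where z: "z \<in> A" "\<not> le z m"
      by blast
    have "z \<notin> Y"
    proof
      assume "z \<in> Y"
      then obtain x where "maximal A x" "le z x" "le x m"
        unfolding Y_def by blast
      then show False
        using poset_trans[of z x m] maximalD(1) z AS mS by blast
    qed
    with z show thesis
      using that by blast
  qed
  moreover have "\<forall>z\<in>Y. \<forall>t\<in>A. le t z \<longrightarrow> t \<in> Y"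
  proof (intro ballI impI)
    fix z t assume "z \<in> Y" "t \<in> A" "le t z"
    then obtain x where "z \<in> A" "maximal A x" "le z x" "le x m"
      unfolding Y_def by blast
    then show "t \<in> Y"
      unfolding Y_def using \<open>t \<in> A\<close> \<open>le t z\<close> poset_trans[of t z x] maximalD(1) AS by blast
  qed
  ultimately obtain u v where uv: "u \<in> Y" "v \<in> A" "v \<notin> Y" "le u v"
    using conn_ideal_leaves_down_closed[OF A, of Y] unfolding Y_def by blast
  obtain x where x: "maximal A x" "le u x" "le x m" and uA: "u \<in> A"
    using uv(1) unfolding Y_def by blast
  obtain w where w: "maximal A w" "le v w"
    using exists_maximal_above[OF AS uv(2)] by blast
  have S: "m \<in> S" "x \<in> S" "u \<in> S" "w \<in> S" "v \<in> S"
    using mS maximalD(1)[OF x(1)] maximalD(1)[OF w(1)] uA uv(2) AS by auto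
  have "\<not> le w m"
    using uv(2,3) w x(1) poset_trans[of v w m] S unfolding Y_def by blast
  moreover have "\<not> le m w"
    using conn_ideal_downward[OF A maximalD(1)[OF w(1)]] mA mS by blast
  moreover have "x \<noteq> w"
    using \<open>\<not> le w m\<close> x(3) by blast
  then have "\<not> le x w" "\<not> le w x"
    using maximalD x(1) w(1) by metis+
  moreover have "u \<noteq> x"
    using maximalD(2)[OF x(1) uv(2)] uv(3,4) x(1,3) uv(2) poset_refl S unfolding Y_def by blast
  moreover have "le u w"
    using poset_trans[of u v w] S uv(4) w(2) by blast
  moreover have "u \<noteq> w"
    using \<open>\<not> le w x\<close> x(2) by blast
  moreover have "x \<noteq> m"
    using mA maximalD(1)[OF x(1)] by blast
  ultimately have "induced_subposet {0::nat, 1, 2, 3} P1_le S le"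
    unfolding induced_P1_iff using S x(2,3) by blast
  with no_P1 show False ..
qed

definition linked :: "'a \<Rightarrow> 'a \<Rightarrow> bool" where
  "linked x y \<longleftrightarrow> x \<noteq> y \<and> (\<exists>u\<in>S. le u x \<and> le u y)"

lemma linked_sym: "linked x y \<Longrightarrow> linked y x"
  unfolding linked_def by blast

text \<open>Within an antichain, a path x - y - z of the linking graph with distinct ends spans P3 if
  one of the two common lower bounds lies below all three elements, and P2 otherwise.\<close>
lemma linked_unique_if_no_P2_P3:
  assumes no_P2: "\<not> induced_subposet {0::nat, 1, 2, 3, 4} P2_le S le"
    and no_P3: "\<not> induced_subposet {0::nat, 1, 2, 3} P3_le S le"
    and M: "M \<subseteq> S" "\<forall>p\<in>M. \<forall>q\<in>M. le p q \<longrightarrow> p = q"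
    and xyz: "x \<in> M" "y \<in> M" "z \<in> M" and "linked x y" "linked x z"
  shows "y = z"
proof (rule ccontr)
  assume "y \<noteq> z"
  obtain f h where f: "f \<in> S" "le f x" "le f y" and h: "h \<in> S" "le h x" "le h z"
    using \<open>linked x y\<close> \<open>linked x z\<close> unfolding linked_def by blast
  have S: "x \<in> S" "y \<in> S" "z \<in> S"
    using M(1) xyz by auto
  have inc: "\<not> le x y" "\<not> le y x" "\<not> le x z" "\<not> le z x" "\<not> le y z" "\<not> le z y"
    using M(2) xyz \<open>linked x y\<close> \<open>linked x z\<close> \<open>y \<noteq> z\<close> unfolding linked_def by metis+
  have strict: "f \<noteq> x" "f \<noteq> y" "h \<noteq> x" "h \<noteq> z"
    using f h inc by auto
  show False
  proof (cases "le f z \<or> le h y")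
    case True
    then have "induced_subposet {0::nat, 1, 2, 3} P3_le S le"
      unfolding induced_P3_iff using S f h inc strict by blast
    with no_P3 show False ..
  next
    case False
    then have "\<not> le f h" "\<not> le h f"
      using poset_trans[of f h z] poset_trans[of h f y] S f h by blast+
    then have "induced_subposet {0::nat, 1, 2, 3, 4} P2_le S le"
      unfolding induced_P2_iff using S f h inc strict False by blast
    with no_P2 show False ..
  qed
qed

text \<open>Connectedness of K passes to its maximal elements: a cover edge leaving the ideal
  generated by some of them joins two maximal elements with a common lower bound.\<close>
lemma maximal_linked_across:
  assumes K: "K \<in> conn_ideals S le" and X: "X \<subseteq> {x. maximal K x}" "x0 \<in> X"
    and k: "maximal K k" "k \<notin> X"
  shows "\<exists>x\<in>X. \<exists>w. maximal K w \<and> w \<notin> X \<and> linked x w"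
proof -
  have KS: "K \<subseteq> S"
    using K conn_ideal_subset by blast
  define Y where "Y = {z \<in> K. \<exists>x\<in>X. le z x}"
  have "x0 \<in> Y"
    unfolding Y_def using X maximalD(1) KS poset_refl by blast
  moreover have "k \<notin> Y"
  proof
    assume "k \<in> Y"
    then obtain x where "x \<in> X" "le k x"
      unfolding Y_def by blast
    then have "x = k"
      using maximalD(2)[OF k(1)] maximalD(1) X(1) by blast
    with \<open>x \<in> X\<close> k(2) show False
      by blast
  qed
  moreover have "\<forall>z\<in>Y. \<forall>t\<in>K. le t z \<longrightarrow> t \<in> Y"
  proof (intro ballI impI)
    fix z t assume "z \<in> Y" "t \<in> K" "le t z"
    then obtain x where "z \<in> K" "x \<in> X" "le z x"
      unfolding Y_def by blast
    then show "t \<in> Y"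
      unfolding Y_def using \<open>t \<in> K\<close> \<open>le t z\<close> poset_trans[of t z x] X(1) maximalD(1) KS by blast
  qed
  ultimately obtain u v where uv: "u \<in> Y" "v \<in> K" "v \<notin> Y" "le u v"
    using conn_ideal_leaves_down_closed[OF K, of Y] maximalD(1)[OF k(1)] unfolding Y_def by blast
  obtain x where x: "x \<in> X" "le u x" "u \<in> K"
    using uv(1) unfolding Y_def by blast
  obtain w where w: "maximal K w" "le v w"
    using exists_maximal_above[OF KS uv(2)] by blast
  have "w \<notin> X"
    using w uv(2,3) unfolding Y_def by blast
  moreover have "le u w"
    using poset_trans[of u v w] uv(2,4) w x(3) maximalD(1) KS by blast
  ultimately have "linked x w"
    unfolding linked_def using x KS by blast
  with w \<open>w \<notin> X\<close> x(1) show ?thesis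
    by blast
qed

lemma maximal_eq_or_linked:
  assumes K: "K \<in> conn_ideals S le" and M: "{x. maximal K x} \<subseteq> M"
    and unique: "\<forall>x\<in>M. \<forall>y\<in>M. \<forall>z\<in>M. linked x y \<longrightarrow> linked x z \<longrightarrow> y = z"
    and x: "maximal K x" and w: "maximal K w"
  shows "w = x \<or> linked x w"
proof (rule ccontr)
  define X where "X = {w. maximal K w \<and> (w = x \<or> linked x w)}"
  assume "\<not> (w = x \<or> linked x w)"
  then have "w \<notin> X"
    unfolding X_def by blast
  then obtain y w' where y: "y \<in> X" and w': "maximal K w'" "w' \<notin> X" "linked y w'"
    using maximal_linked_across[OF K _ _ w, of X x] x unfolding X_def by blast
  have "y = x \<or> linked x y"
    using y unfolding X_def by blast
  then show False
  proof
    assume "y = x"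
    with w' show False
      unfolding X_def by blast
  next
    assume "linked x y"
    then have "w' = x"
      using unique M w' y x linked_sym unfolding X_def by blast
    with w' x show False
      unfolding X_def by blast
  qed
qed

lemma linked_pair_closed:
  assumes unique: "\<forall>x\<in>M. \<forall>y\<in>M. \<forall>z\<in>M. linked x y \<longrightarrow> linked x z \<longrightarrow> y = z"
    and "a \<in> M" "a' \<in> M" "linked a a'" and "z \<in> {a, a'}" "z' \<in> M" "z' = z \<or> linked z z'"
  shows "z' \<in> {a, a'}"
  using assms linked_sym by blast

text \<open>Without P1, P2 and P3 the maximal elements of A \<union> B form an antichain in which every element
  is linked to at most one other. A second maximal element of A would thus form, together with the
  first, a closed pair containing all maximal elements of B, forcing B \<subseteq> A.\<close>
lemma Pi_pair_principal:
  assumes no_P1: "\<not> induced_subposet {0::nat, 1, 2, 3} P1_le S le"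
    and no_P2: "\<not> induced_subposet {0::nat, 1, 2, 3, 4} P2_le S le"
    and no_P3: "\<not> induced_subposet {0::nat, 1, 2, 3} P3_le S le"
    and A: "A \<in> conn_ideals S le" and B: "B \<in> conn_ideals S le"
    and nontriv: "intersect_nontrivially A B"
  shows "\<exists>a. A = down a \<and> maximal (A \<union> B) a"
proof -
  define M where "M = {x. maximal (A \<union> B) x}"
  have AS: "A \<subseteq> S" and BS: "B \<subseteq> S"
    using A B conn_ideal_subset by auto
  have AB: "\<not> A \<subseteq> B" "\<not> B \<subseteq> A"
    using nontriv unfolding intersect_nontrivially_def by auto
  obtain c where c: "c \<in> A" "c \<in> B"
    using nontriv unfolding intersect_nontrivially_def by blast
  have max_A: "{x. maximal A x} \<subseteq> M"
    unfolding M_def using maximal_in_Un_if_no_P1[OF no_P1 A B AB(1)] by blast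
  have max_B: "{x. maximal B x} \<subseteq> M"
    unfolding M_def using maximal_in_Un_if_no_P1[OF no_P1 B A AB(2)] by (auto simp: Un_commute)
  have "M \<subseteq> S" "\<forall>p\<in>M. \<forall>q\<in>M. le p q \<longrightarrow> p = q"
    unfolding M_def maximal_def using AS BS by auto
  then have unique: "\<forall>x\<in>M. \<forall>y\<in>M. \<forall>z\<in>M. linked x y \<longrightarrow> linked x z \<longrightarrow> y = z"
    using linked_unique_if_no_P2_P3[OF no_P2 no_P3] by blast
  obtain \<alpha> where \<alpha>: "maximal A \<alpha>" "le c \<alpha>"
    using exists_maximal_above[OF AS c(1)] by blast
  obtain \<beta> where \<beta>: "maximal B \<beta>" "le c \<beta>"
    using exists_maximal_above[OF BS c(2)] by blast
  have "\<beta> = \<alpha> \<or> linked \<alpha> \<beta>"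
    unfolding linked_def using \<alpha>(2) \<beta>(2) c(1) AS by blast
  have \<alpha>_unique: "a' = \<alpha>" if a': "maximal A a'" for a'
  proof (rule ccontr)
    assume "a' \<noteq> \<alpha>"
    then have "linked \<alpha> a'"
      using maximal_eq_or_linked[OF A max_A unique \<alpha>(1) a'] by blast
    have pair: "\<alpha> \<in> M" "a' \<in> M"
      using max_A \<alpha>(1) a' by auto
    have "\<beta> \<in> {\<alpha>, a'}"
      using linked_pair_closed[OF unique pair \<open>linked \<alpha> a'\<close>] \<open>\<beta> = \<alpha> \<or> linked \<alpha> \<beta>\<close> \<beta>(1) max_B
      by blast
    have "b \<in> A" if "maximal B b" for b
    proof -
      have "b = \<beta> \<or> linked \<beta> b"
        using maximal_eq_or_linked[OF B max_B unique \<beta>(1) that] .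
      then have "b \<in> {\<alpha>, a'}"
        using linked_pair_closed[OF unique pair \<open>linked \<alpha> a'\<close> \<open>\<beta> \<in> {\<alpha>, a'}\<close>] that max_B by blast
      then show ?thesis
        using maximalD(1) \<alpha>(1) a' by blast
    qed
    then have "B \<subseteq> A"
      using exists_maximal_above[OF BS] conn_ideal_downward[OF A] BS by blast
    with AB(2) show False ..
  qed
  have "A = down \<alpha>"
  proof
    show "A \<subseteq> down \<alpha>"
      using exists_maximal_above[OF AS] \<alpha>_unique AS by fastforce
    show "down \<alpha> \<subseteq> A"
      using conn_ideal_downward[OF A maximalD(1)[OF \<alpha>(1)]] by auto
  qed
  with \<alpha>(1) max_A show ?thesis
    unfolding M_def by blast
qed

lemma Pi_pair_eq_down_maximal:
  assumes no_P1: "\<not> induced_subposet {0::nat, 1, 2, 3} P1_le S le"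
    and no_P2: "\<not> induced_subposet {0::nat, 1, 2, 3, 4} P2_le S le"
    and no_P3: "\<not> induced_subposet {0::nat, 1, 2, 3} P3_le S le"
    and p: "p \<in> Pi_pairs S le"
  shows "p = down ` {x. maximal (\<Union>p) x}"
proof -
  obtain A B where AB: "p = {A, B}" "A \<in> conn_ideals S le" "B \<in> conn_ideals S le"
    and nontriv: "intersect_nontrivially A B"
    using p by (elim Pi_pairsE)
  then have "intersect_nontrivially B A"
    unfolding intersect_nontrivially_def by blast
  obtain a b where a: "A = down a" "maximal (A \<union> B) a" and b: "B = down b" "maximal (A \<union> B) b"
    using Pi_pair_principal[OF no_P1 no_P2 no_P3 AB(2,3) nontriv]
      Pi_pair_principal[OF no_P1 no_P2 no_P3 AB(3,2) \<open>intersect_nontrivially B A\<close>]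
    by (metis Un_commute)
  have "maximal (A \<union> B) x \<longleftrightarrow> x = a \<or> x = b" for x
    using a b maximalD unfolding maximal_def by auto
  then show ?thesis
    using AB(1) a(1) b(1) by auto
qed

lemma inj_on_Union_if_no_P1_P2_P3:
  assumes "\<not> induced_subposet {0::nat, 1, 2, 3} P1_le S le"
    and "\<not> induced_subposet {0::nat, 1, 2, 3, 4} P2_le S le"
    and "\<not> induced_subposet {0::nat, 1, 2, 3} P3_le S le"
  shows "inj_on Union (Pi_pairs S le)"
  by (rule inj_on_inverseI[where g = "\<lambda>J. down ` {x. maximal J x}"])
    (use Pi_pair_eq_down_maximal[OF assms] in auto)

end

theorem theorem10p5:
  fixes S :: "'a set" and le :: "'a \<Rightarrow> 'a \<Rightarrow> bool"
  assumes "finite_poset S le"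
  shows "ci_poset S le \<longleftrightarrow>
           \<not> induced_subposet {0::nat, 1, 2, 3} P1_le S le \<and>
           \<not> induced_subposet {0::nat, 1, 2, 3, 4} P2_le S le \<and>
           \<not> induced_subposet {0::nat, 1, 2, 3} P3_le S le"
proof -
  interpret fin_poset S le
    by (rule fin_poset.intro) (rule assms)
  show ?thesis
    unfolding ci_poset_iff_inj_on_Union
    using induced_P1_not_inj induced_P2_not_inj induced_P3_not_inj inj_on_Union_if_no_P1_P2_P3
    by blast
qed

end
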